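(* Let $\Bbbk$ be an algebraically closed field of characteristic zero, $G$ a finite abelian group, $u\in G$ an element of order $2$, and $V$ a finite-dimensional $\Bbbk G$-module with $u\cdot v=-v$ for all $v\in V$. Let $\mathcal{A}=\mathcal{A}(V,u,G)$ be the finite supergroup algebra. Then the algebra map $\phi:\mathcal{A}\to\mathcal{A}^{\mathrm{cop}}$ determined by $\phi(v)=vu$ for $v\in V$ and $\phi(g)=g$ for $g\in G$ is a Hopf algebra isomorphism.
   Context: The finite supergroup algebra $\mathcal{A}(V,u,G)$ is the Hopf algebra $\wedge(V)\# \Bbbk G$: as an algebra it is generated by the elements of $V$ (linearly) and of $G$, subject to the group relations of $G$ and to $vw+wv=0$ and $gv=(g\cdot v)g$ for $v,w\in V$, $g\in G$; its coproduct, counit and antipode are determined by $\Delta(v)=v\otimes 1+u\otimes v$, $\Delta(g)=g\otimes g$, $\varepsilon(v)=0$, $\varepsilon(g)=1$, $S(v)=-uv$, $S(g)=g^{-1}$. $\mathcal{A}^{\mathrm{cop}}$ denotes the same algebra with opposite coproduct. *)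

theory Defs
  imports "HOL-Computational_Algebra.Polynomial"
begin

definition alg_closed_type :: "'k::field itself \<Rightarrow> bool" where
  "alg_closed_type _ \<longleftrightarrow> (\<forall>p::'k poly. degree p > 0 \<longrightarrow> (\<exists>x. poly p x = 0))"

text \<open>V = k^n with basis e_0..e_(n-1); a G-module structure is a matrix representation
  rho: g . e_i = sum_j rho g j i e_j.  G is a finite abelian group written additively.\<close>
definition is_rep :: "nat \<Rightarrow> ('g::ab_group_add \<Rightarrow> nat \<Rightarrow> nat \<Rightarrow> 'k::comm_ring_1) \<Rightarrow> bool" where
  "is_rep n \<rho> \<longleftrightarrow>
     (\<forall>i<n. \<forall>j<n. \<rho> 0 i j = (if i = j then 1 else 0)) \<and>
     (\<forall>g h. \<forall>i<n. \<forall>j<n. \<rho> (g + h) i j = (\<Sum>l<n. \<rho> g i l * \<rho> h l j))"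

text \<open>Exterior algebra of V: coefficient functions on the basis e_S, S \<subseteq> {..<n},
  e_S = e_(i1) \<wedge> ... \<wedge> e_(ik) with i1 < ... < ik.\<close>
definition ext_sign :: "nat set \<Rightarrow> nat set \<Rightarrow> 'k::comm_ring_1" where
  "ext_sign S T = (if S \<inter> T = {} then (-1) ^ card {(i,j). i \<in> S \<and> j \<in> T \<and> j < i} else 0)"

definition ext_basis :: "nat set \<Rightarrow> nat set \<Rightarrow> 'k::zero_neq_one" where
  "ext_basis S = (\<lambda>R. if R = S then 1 else 0)"

definition ext_wedge :: "nat \<Rightarrow> (nat set \<Rightarrow> 'k) \<Rightarrow> (nat set \<Rightarrow> 'k) \<Rightarrow> nat set \<Rightarrow> 'k::comm_ring_1" where
  "ext_wedge n x y = (\<lambda>R. \<Sum>S\<in>Pow {..<n}. \<Sum>T\<in>Pow {..<n}.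
      if S \<union> T = R then x S * y T * ext_sign S T else 0)"

definition ext_gen_act :: "nat \<Rightarrow> ('g \<Rightarrow> nat \<Rightarrow> nat \<Rightarrow> 'k::comm_ring_1) \<Rightarrow> 'g \<Rightarrow> nat \<Rightarrow> nat set \<Rightarrow> 'k" where
  "ext_gen_act n \<rho> g i = (\<lambda>R. \<Sum>j<n. \<rho> g j i * ext_basis {j} R)"

definition ext_act_basis :: "nat \<Rightarrow> ('g \<Rightarrow> nat \<Rightarrow> nat \<Rightarrow> 'k::comm_ring_1) \<Rightarrow> 'g \<Rightarrow> nat set \<Rightarrow> nat set \<Rightarrow> 'k" where
  "ext_act_basis n \<rho> g S =
     foldr (\<lambda>i acc. ext_wedge n (ext_gen_act n \<rho> g i) acc) (sorted_list_of_set S) (ext_basis {})"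

text \<open>The smash product A = \<wedge>(V) # kG: an element is a coefficient function a S g on the
  basis e_S g (S \<subseteq> {..<n}, g \<in> G).\<close>
definition sa_carrier :: "nat \<Rightarrow> (nat set \<Rightarrow> 'g \<Rightarrow> 'k::zero) set" where
  "sa_carrier n = {a. \<forall>S g. \<not> S \<subseteq> {..<n} \<longrightarrow> a S g = 0}"

definition sa_basis :: "nat set \<Rightarrow> 'g \<Rightarrow> nat set \<Rightarrow> 'g \<Rightarrow> 'k::zero_neq_one" where
  "sa_basis S g = (\<lambda>R h. if R = S \<and> h = g then 1 else 0)"

definition sa_add :: "(nat set \<Rightarrow> 'g \<Rightarrow> 'k::plus) \<Rightarrow> (nat set \<Rightarrow> 'g \<Rightarrow> 'k) \<Rightarrow> nat set \<Rightarrow> 'g \<Rightarrow> 'k" where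
  "sa_add a b = (\<lambda>S g. a S g + b S g)"

definition sa_smul :: "'k::times \<Rightarrow> (nat set \<Rightarrow> 'g \<Rightarrow> 'k) \<Rightarrow> nat set \<Rightarrow> 'g \<Rightarrow> 'k" where
  "sa_smul c a = (\<lambda>S g. c * a S g)"

text \<open>(x # g)(y # h) = x (g . y) # (g h)\<close>
definition sa_mul :: "nat \<Rightarrow> ('g::{ab_group_add,finite} \<Rightarrow> nat \<Rightarrow> nat \<Rightarrow> 'k::comm_ring_1)
     \<Rightarrow> (nat set \<Rightarrow> 'g \<Rightarrow> 'k) \<Rightarrow> (nat set \<Rightarrow> 'g \<Rightarrow> 'k) \<Rightarrow> nat set \<Rightarrow> 'g \<Rightarrow> 'k" where
  "sa_mul n \<rho> a b = (\<lambda>R k. \<Sum>S\<in>Pow {..<n}. \<Sum>g\<in>UNIV. \<Sum>T\<in>Pow {..<n}. \<Sum>h\<in>UNIV.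
      if g + h = k then a S g * b T h * ext_wedge n (ext_basis S) (ext_act_basis n \<rho> g T) R else 0)"

definition sa_one :: "nat set \<Rightarrow> 'g::zero \<Rightarrow> 'k::zero_neq_one" where
  "sa_one = sa_basis {} 0"

definition sa_vec :: "nat \<Rightarrow> (nat \<Rightarrow> 'k::comm_ring_1) \<Rightarrow> nat set \<Rightarrow> 'g::zero \<Rightarrow> 'k" where
  "sa_vec n x = (\<lambda>S g. if g = 0 then (\<Sum>i<n. x i * ext_basis {i} S) else 0)"

definition sa_grp :: "'g \<Rightarrow> nat set \<Rightarrow> 'g \<Rightarrow> 'k::zero_neq_one" where
  "sa_grp g = sa_basis {} g"

definition sa_alg_hom :: "nat \<Rightarrow> ('g::{ab_group_add,finite} \<Rightarrow> nat \<Rightarrow> nat \<Rightarrow> 'k::comm_ring_1)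
     \<Rightarrow> ((nat set \<Rightarrow> 'g \<Rightarrow> 'k) \<Rightarrow> (nat set \<Rightarrow> 'g \<Rightarrow> 'k)) \<Rightarrow> bool" where
  "sa_alg_hom n \<rho> \<phi> \<longleftrightarrow>
     (\<forall>a\<in>sa_carrier n. \<phi> a \<in> sa_carrier n) \<and>
     (\<forall>a\<in>sa_carrier n. \<forall>b\<in>sa_carrier n. \<phi> (sa_add a b) = sa_add (\<phi> a) (\<phi> b)) \<and>
     (\<forall>c. \<forall>a\<in>sa_carrier n. \<phi> (sa_smul c a) = sa_smul c (\<phi> a)) \<and>
     (\<forall>a\<in>sa_carrier n. \<forall>b\<in>sa_carrier n. \<phi> (sa_mul n \<rho> a b) = sa_mul n \<rho> (\<phi> a) (\<phi> b)) \<and>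
     \<phi> sa_one = sa_one"

text \<open>A \<otimes> A: coefficient functions on pairs of basis elements.\<close>
definition sa_tensor :: "(nat set \<Rightarrow> 'g \<Rightarrow> 'k::times) \<Rightarrow> (nat set \<Rightarrow> 'g \<Rightarrow> 'k) \<Rightarrow> nat set \<Rightarrow> 'g \<Rightarrow> nat set \<Rightarrow> 'g \<Rightarrow> 'k" where
  "sa_tensor a b = (\<lambda>S g T h. a S g * b T h)"

text \<open>(a \<otimes> b)(c \<otimes> d) = ac \<otimes> bd, extended bilinearly\<close>
definition sa2_mul :: "nat \<Rightarrow> ('g::{ab_group_add,finite} \<Rightarrow> nat \<Rightarrow> nat \<Rightarrow> 'k::comm_ring_1)
     \<Rightarrow> (nat set \<Rightarrow> 'g \<Rightarrow> nat set \<Rightarrow> 'g \<Rightarrow> 'k) \<Rightarrow> (nat set \<Rightarrow> 'g \<Rightarrow> nat set \<Rightarrow> 'g \<Rightarrow> 'k)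
     \<Rightarrow> nat set \<Rightarrow> 'g \<Rightarrow> nat set \<Rightarrow> 'g \<Rightarrow> 'k" where
  "sa2_mul n \<rho> X Y = (\<lambda>S1 g1 S2 g2.
     \<Sum>P1\<in>Pow {..<n}. \<Sum>p1\<in>UNIV. \<Sum>P2\<in>Pow {..<n}. \<Sum>p2\<in>UNIV.
     \<Sum>Q1\<in>Pow {..<n}. \<Sum>q1\<in>UNIV. \<Sum>Q2\<in>Pow {..<n}. \<Sum>q2\<in>UNIV.
       X P1 p1 P2 p2 * Y Q1 q1 Q2 q2
       * sa_mul n \<rho> (sa_basis P1 p1) (sa_basis Q1 q1) S1 g1
       * sa_mul n \<rho> (sa_basis P2 p2) (sa_basis Q2 q2) S2 g2)"

definition sa_Delta_gen :: "nat \<Rightarrow> 'g::{ab_group_add,finite} \<Rightarrow> nat \<Rightarrow> nat set \<Rightarrow> 'g \<Rightarrow> nat set \<Rightarrow> 'g \<Rightarrow> 'k::comm_ring_1" where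
  "sa_Delta_gen n u i = (\<lambda>S1 g1 S2 g2.
     sa_tensor (sa_vec n (\<lambda>j. if j = i then 1 else 0)) sa_one S1 g1 S2 g2
     + sa_tensor (sa_grp u) (sa_vec n (\<lambda>j. if j = i then 1 else 0)) S1 g1 S2 g2)"

text \<open>Delta(e_S g) = Delta(e_(i1)) ... Delta(e_(ik)) (g \<otimes> g)  (Delta is an algebra map)\<close>
definition sa_Delta_basis :: "nat \<Rightarrow> ('g::{ab_group_add,finite} \<Rightarrow> nat \<Rightarrow> nat \<Rightarrow> 'k::comm_ring_1) \<Rightarrow> 'g
     \<Rightarrow> nat set \<Rightarrow> 'g \<Rightarrow> nat set \<Rightarrow> 'g \<Rightarrow> nat set \<Rightarrow> 'g \<Rightarrow> 'k" where
  "sa_Delta_basis n \<rho> u S g =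
     sa2_mul n \<rho>
       (foldr (\<lambda>i acc. sa2_mul n \<rho> (sa_Delta_gen n u i) acc) (sorted_list_of_set S) (sa_tensor sa_one sa_one))
       (sa_tensor (sa_grp g) (sa_grp g))"

definition sa_Delta :: "nat \<Rightarrow> ('g::{ab_group_add,finite} \<Rightarrow> nat \<Rightarrow> nat \<Rightarrow> 'k::comm_ring_1) \<Rightarrow> 'g
     \<Rightarrow> (nat set \<Rightarrow> 'g \<Rightarrow> 'k) \<Rightarrow> nat set \<Rightarrow> 'g \<Rightarrow> nat set \<Rightarrow> 'g \<Rightarrow> 'k" where
  "sa_Delta n \<rho> u a = (\<lambda>S1 g1 S2 g2. \<Sum>S\<in>Pow {..<n}. \<Sum>g\<in>UNIV. a S g * sa_Delta_basis n \<rho> u S g S1 g1 S2 g2)"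

definition sa_Delta_cop :: "nat \<Rightarrow> ('g::{ab_group_add,finite} \<Rightarrow> nat \<Rightarrow> nat \<Rightarrow> 'k::comm_ring_1) \<Rightarrow> 'g
     \<Rightarrow> (nat set \<Rightarrow> 'g \<Rightarrow> 'k) \<Rightarrow> nat set \<Rightarrow> 'g \<Rightarrow> nat set \<Rightarrow> 'g \<Rightarrow> 'k" where
  "sa_Delta_cop n \<rho> u a = (\<lambda>S1 g1 S2 g2. sa_Delta n \<rho> u a S2 g2 S1 g1)"

definition sa_eps :: "(nat set \<Rightarrow> 'g::finite \<Rightarrow> 'k::comm_ring_1) \<Rightarrow> 'k" where
  "sa_eps a = (\<Sum>g\<in>UNIV. a {} g)"

definition sa_map2 :: "nat \<Rightarrow> ((nat set \<Rightarrow> 'g::finite \<Rightarrow> 'k::comm_ring_1) \<Rightarrow> (nat set \<Rightarrow> 'g \<Rightarrow> 'k))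
     \<Rightarrow> (nat set \<Rightarrow> 'g \<Rightarrow> nat set \<Rightarrow> 'g \<Rightarrow> 'k) \<Rightarrow> nat set \<Rightarrow> 'g \<Rightarrow> nat set \<Rightarrow> 'g \<Rightarrow> 'k" where
  "sa_map2 n \<phi> X = (\<lambda>S1 g1 S2 g2. \<Sum>P\<in>Pow {..<n}. \<Sum>p\<in>UNIV. \<Sum>Q\<in>Pow {..<n}. \<Sum>q\<in>UNIV.
      X P p Q q * \<phi> (sa_basis P p) S1 g1 * \<phi> (sa_basis Q q) S2 g2)"

end

theory Submission
  imports Defs
begin

text \<open>An algebra map out of \<open>\<wedge>(V) # kG\<close> is determined by its values on \<open>V\<close> and \<open>G\<close>, so the
  map exists and is unique as soon as one suitable map is exhibited. Since \<open>u\<close> anticommutes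
  with \<open>V\<close>, the prescribed map must send \<open>e\<^sub>S g\<close> to \<open>\<pm> e\<^sub>S u\<^sup>|\<^sup>S\<^sup>| g\<close>, the sign
  being that of reversing \<open>|S|\<close> letters; this explicit map is multiplicative because
  translating the group index by \<open>u\<^sup>|\<^sup>T\<^sup>|\<close> changes the \<open>G\<close>-action on \<open>e\<^sub>T\<close> by the sign
  \<open>(-1)\<^sup>|\<^sup>T\<^sup>|\<close>, and it is an involution, hence bijective. Compatibility with the coproducts is
  checked on basis elements: \<open>\<Delta>(e\<^sub>S g)\<close> is a signed sum over the splittings \<open>S = A \<union> B\<close>,
  and swapping the tensor factors costs the sign \<open>(-1)\<^sup>|\<^sup>A\<^sup>|\<^sup>|\<^sup>B\<^sup>|\<close>, which is exactly the
  defect of the reversal sign on \<open>|A| + |B|\<close>.\<close>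

lemma sum_UNIV_translate:
  "(\<Sum>g\<in>(UNIV::'g::{ab_group_add,finite} set). f g) = (\<Sum>g\<in>UNIV. f (g + c))"
  by (rule sum.reindex_bij_witness[where i="\<lambda>g. g + c" and j="\<lambda>g. g - c"]) auto

lemma sum_UNIV_translate_nested:
  "(\<Sum>S\<in>A. \<Sum>g\<in>(UNIV::'g::{ab_group_add,finite} set). \<Sum>T\<in>B. \<Sum>h\<in>(UNIV::'g set). f S g T h)
   = (\<Sum>S\<in>A. \<Sum>g\<in>UNIV. \<Sum>T\<in>B. \<Sum>h\<in>UNIV. f S (g + c S) T (h + d T))"
proof (rule sum.cong[OF refl])
  fix S
  have "(\<Sum>g\<in>(UNIV::'g set). \<Sum>T\<in>B. \<Sum>h\<in>(UNIV::'g set). f S g T h)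
      = (\<Sum>g\<in>UNIV. \<Sum>T\<in>B. \<Sum>h\<in>(UNIV::'g set). f S (g + c S) T h)"
    by (rule sum_UNIV_translate)
  also have "\<dots> = (\<Sum>g\<in>UNIV. \<Sum>T\<in>B. \<Sum>h\<in>UNIV. f S (g + c S) T (h + d T))"
    by (intro sum.cong refl sum_UNIV_translate)
  finally show "(\<Sum>g\<in>(UNIV::'g set). \<Sum>T\<in>B. \<Sum>h\<in>(UNIV::'g set). f S g T h)
      = (\<Sum>g\<in>UNIV. \<Sum>T\<in>B. \<Sum>h\<in>UNIV. f S (g + c S) T (h + d T))" .
qed

lemma sum_pair_delta:
  assumes "finite A"
  shows "(\<Sum>T\<in>A. \<Sum>h\<in>(UNIV::'g::finite set). if T = Q \<and> h = q then f T h else 0)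
    = (if Q \<in> A then f Q q else (0::'a::comm_monoid_add))"
proof -
  have "(\<Sum>T\<in>A. \<Sum>h\<in>(UNIV::'g set). if T = Q \<and> h = q then f T h else 0)
      = (\<Sum>T\<in>A. if T = Q then f Q q else 0)"
    by (rule sum.cong[OF refl]) (simp add: sum.delta)
  also have "\<dots> = (if Q \<in> A then f Q q else 0)" using assms by (simp add: sum.delta)
  finally show ?thesis .
qed

lemma sum4_delta:
  fixes f :: "nat set \<Rightarrow> 'g::finite \<Rightarrow> nat set \<Rightarrow> 'g \<Rightarrow> 'k::comm_monoid_add"
  shows "(\<Sum>Q1\<in>Pow {..<n}. \<Sum>q1\<in>(UNIV::'g set). \<Sum>Q2\<in>Pow {..<n}. \<Sum>q2\<in>(UNIV::'g set).
      if Q1 = a \<and> q1 = b \<and> Q2 = c \<and> q2 = d then f Q1 q1 Q2 q2 else 0)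
   = (if a \<subseteq> {..<n} \<and> c \<subseteq> {..<n} then f a b c d else 0)"
proof -
  have "(\<Sum>Q2\<in>Pow {..<n}. \<Sum>q2\<in>(UNIV::'g set).
      if Q1 = a \<and> q1 = b \<and> Q2 = c \<and> q2 = d then f Q1 q1 Q2 q2 else 0)
    = (if Q1 = a \<and> q1 = b then (if c \<subseteq> {..<n} then f a b c d else 0) else 0)" for Q1 q1
  proof (cases "Q1 = a \<and> q1 = b")
    case True
    then have "(\<Sum>Q2\<in>Pow {..<n}. \<Sum>q2\<in>(UNIV::'g set).
        if Q1 = a \<and> q1 = b \<and> Q2 = c \<and> q2 = d then f Q1 q1 Q2 q2 else 0)
      = (\<Sum>Q2\<in>Pow {..<n}. \<Sum>q2\<in>(UNIV::'g set). if Q2 = c \<and> q2 = d then f a b c d else 0)"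
      by (intro sum.cong refl) auto
    also have "\<dots> = (if c \<in> Pow {..<n} then f a b c d else 0)"
      by (rule sum_pair_delta) simp
    finally show ?thesis using True by simp
  next
    case False
    then show ?thesis by (auto intro!: sum.neutral)
  qed
  then show ?thesis by (simp add: sum_pair_delta)
qed

lemma sum4_single:
  fixes f :: "nat set \<Rightarrow> 'g::finite \<Rightarrow> nat set \<Rightarrow> 'g \<Rightarrow> 'k::comm_monoid_add"
  assumes "\<And>Q1 q1 Q2 q2. f Q1 q1 Q2 q2 \<noteq> 0 \<Longrightarrow> Q1 = a \<and> q1 = b \<and> Q2 = c \<and> q2 = d"
  shows "(\<Sum>Q1\<in>Pow {..<n}. \<Sum>q1\<in>UNIV. \<Sum>Q2\<in>Pow {..<n}. \<Sum>q2\<in>UNIV. f Q1 q1 Q2 q2)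
     = (if a \<subseteq> {..<n} \<and> c \<subseteq> {..<n} then f a b c d else 0)"
proof -
  have "(\<Sum>Q1\<in>Pow {..<n}. \<Sum>q1\<in>UNIV. \<Sum>Q2\<in>Pow {..<n}. \<Sum>q2\<in>UNIV. f Q1 q1 Q2 q2)
    = (\<Sum>Q1\<in>Pow {..<n}. \<Sum>q1\<in>UNIV. \<Sum>Q2\<in>Pow {..<n}. \<Sum>q2\<in>UNIV.
        if Q1 = a \<and> q1 = b \<and> Q2 = c \<and> q2 = d then f Q1 q1 Q2 q2 else 0)"
    by (intro sum.cong refl) (metis assms)
  then show ?thesis by (simp only: sum4_delta)
qed

lemma add_eq_iff_eq_add_self_inverse:
  "(c::'g::ab_group_add) + c = 0 \<Longrightarrow> (x + c = k) = (x = k + c)"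
  by (metis add.assoc add.right_neutral)

lemma sa_basis_carrier: "S \<subseteq> {..<n} \<Longrightarrow> sa_basis S g \<in> sa_carrier n"
  by (auto simp: sa_carrier_def sa_basis_def)

definition sa_restrict :: "(nat set \<times> 'g) set \<Rightarrow> (nat set \<Rightarrow> 'g \<Rightarrow> 'k::zero) \<Rightarrow> nat set \<Rightarrow> 'g \<Rightarrow> 'k" where
  "sa_restrict X a = (\<lambda>S g. if (S, g) \<in> X then a S g else 0)"

lemma sa_linear_eqI:
  fixes \<phi> \<psi> :: "(nat set \<Rightarrow> 'g::finite \<Rightarrow> 'k::comm_ring_1) \<Rightarrow> nat set \<Rightarrow> 'g \<Rightarrow> 'k"
  assumes add: "\<forall>a\<in>sa_carrier n. \<forall>b\<in>sa_carrier n. \<phi> (sa_add a b) = sa_add (\<phi> a) (\<phi> b)"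
    and smul: "\<forall>c. \<forall>a\<in>sa_carrier n. \<phi> (sa_smul c a) = sa_smul c (\<phi> a)"
    and add': "\<forall>a\<in>sa_carrier n. \<forall>b\<in>sa_carrier n. \<psi> (sa_add a b) = sa_add (\<psi> a) (\<psi> b)"
    and smul': "\<forall>c. \<forall>a\<in>sa_carrier n. \<psi> (sa_smul c a) = sa_smul c (\<psi> a)"
    and basis: "\<And>S g. S \<subseteq> {..<n} \<Longrightarrow> \<phi> (sa_basis S g) = \<psi> (sa_basis S g)"
    and a: "a \<in> sa_carrier n"
  shows "\<phi> a = \<psi> a"
proof -
  have restrict_carrier: "sa_restrict X a \<in> sa_carrier n" for X
    using a by (auto simp: sa_carrier_def sa_restrict_def)
  have "\<phi> (sa_restrict X a) = \<psi> (sa_restrict X a)" if "finite X" "X \<subseteq> Pow {..<n} \<times> UNIV" for X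
    using that
  proof (induction X rule: finite_induct)
    case empty
    have "sa_restrict {} a = sa_smul 0 a"
      by (intro ext) (simp add: sa_restrict_def sa_smul_def)
    then show ?case using smul smul' a by (metis mult_zero_left sa_smul_def)
  next
    case (insert x X)
    obtain S g where x: "x = (S, g)" by fastforce
    have S: "S \<subseteq> {..<n}" using insert x by auto
    have e: "sa_restrict (insert x X) a = sa_add (sa_restrict X a) (sa_smul (a S g) (sa_basis S g))"
      using insert(2) x by (intro ext) (auto simp: sa_restrict_def sa_add_def sa_smul_def sa_basis_def)
    have term_carrier: "sa_smul (a S g) (sa_basis S g) \<in> sa_carrier n"
      using S by (auto simp: sa_carrier_def sa_smul_def sa_basis_def)
    have "\<phi> (sa_smul (a S g) (sa_basis S g)) = \<psi> (sa_smul (a S g) (sa_basis S g))"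
      using smul smul' sa_basis_carrier[OF S] basis[OF S] by metis
    then show ?case
      unfolding e using add add' restrict_carrier term_carrier insert by simp
  qed
  moreover have "sa_restrict (Pow {..<n} \<times> UNIV) a = a"
    using a by (intro ext) (auto simp: sa_restrict_def sa_carrier_def)
  ultimately show ?thesis by (metis finite_Pow_iff finite_lessThan finite_SigmaI finite_UNIV order_refl)
qed

section \<open>Signs\<close>

definition inversions :: "nat set \<Rightarrow> nat set \<Rightarrow> (nat \<times> nat) set" where
  "inversions A B = {(i, j). i \<in> A \<and> j \<in> B \<and> j < i}"

lemma ext_sign_inversions:
  "(ext_sign A B :: 'k::comm_ring_1) = (if A \<inter> B = {} then (-1) ^ card (inversions A B) else 0)"
  by (simp add: ext_sign_def inversions_def)

lemma ext_sign_empty_left [simp]: "ext_sign {} B = 1"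
  by (simp add: ext_sign_def)

lemma ext_sign_empty_right [simp]: "ext_sign A {} = 1"
  by (simp add: ext_sign_def)

lemma ext_sign_nonzero_iff: "((ext_sign A B :: 'k::comm_ring_1) \<noteq> 0) = (A \<inter> B = {})"
proof -
  have "((-1) ^ m :: 'k) \<noteq> 0" for m
    by (metis minus_one_mult_self mult_zero_left zero_neq_one)
  then show ?thesis by (simp add: ext_sign_inversions)
qed

lemma ext_sign_insert_left_min:
  assumes "x \<notin> B" "\<forall>j\<in>B. x < j"
  shows "(ext_sign (insert x A) B :: 'k::comm_ring_1) = ext_sign A B"
proof -
  have "inversions (insert x A) B = inversions A B" using assms by (auto simp: inversions_def)
  moreover have "(insert x A \<inter> B = {}) = (A \<inter> B = {})" using assms by auto
  ultimately show ?thesis by (simp add: ext_sign_inversions)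
qed

lemma ext_sign_insert_right_min:
  assumes "x \<notin> A" "x \<notin> B" "\<forall>i\<in>A. x < i" "finite A" "finite B"
  shows "(ext_sign A (insert x B) :: 'k::comm_ring_1) = (-1) ^ card A * ext_sign A B"
proof -
  have e: "inversions A (insert x B) = inversions A B \<union> A \<times> {x}"
    using assms by (auto simp: inversions_def)
  have "finite (inversions A B)"
    using assms by (auto intro: finite_subset[of _ "A \<times> B"] simp: inversions_def)
  moreover have "inversions A B \<inter> A \<times> {x} = {}" using assms by (auto simp: inversions_def)
  ultimately have "card (inversions A (insert x B)) = card (inversions A B) + card A"
    unfolding e using assms by (simp add: card_Un_disjoint card_cartesian_product)
  moreover have "(A \<inter> insert x B = {}) = (A \<inter> B = {})" using assms by auto
  ultimately show ?thesis by (simp add: ext_sign_inversions power_add algebra_simps)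
qed

lemma ext_sign_swap:
  assumes "A \<inter> B = {}" "finite A" "finite B"
  shows "(ext_sign A B :: 'k::comm_ring_1) = (-1) ^ (card A * card B) * ext_sign B A"
proof -
  let ?Q = "{(i, j). i \<in> A \<and> j \<in> B \<and> i < j}"
  have "inversions B A = prod.swap ` ?Q" by (auto simp: inversions_def image_iff)
  then have cBA: "card (inversions B A) = card ?Q" by (simp add: card_image)
  have split: "A \<times> B = inversions A B \<union> ?Q" "inversions A B \<inter> ?Q = {}"
    using assms by (auto simp: inversions_def)
  have "card A * card B = card (inversions A B \<union> ?Q)"
    by (simp add: card_cartesian_product flip: split(1))
  also have "\<dots> = card (inversions A B) + card ?Q"
  proof (rule card_Un_disjoint)
    have "finite (inversions A B \<union> ?Q)" using assms by (simp flip: split(1))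
    then show "finite (inversions A B)" "finite ?Q" by simp_all
  qed (rule split(2))
  finally have "card A * card B = card (inversions A B) + card ?Q" .
  then show ?thesis
    using assms minus_one_mult_self[of "card ?Q", where 'a='k]
    by (simp add: ext_sign_inversions cBA power_add Int_commute mult.assoc)
qed

text \<open>The sign \<open>(-1)^(m(m-1)/2)\<close> of the reversal of \<open>m\<close> letters.\<close>

fun rev_sign :: "nat \<Rightarrow> 'k::comm_ring_1" where
  "rev_sign 0 = 1"
| "rev_sign (Suc m) = (-1) ^ m * rev_sign m"

lemma rev_sign_add: "(rev_sign (a + b) :: 'k::comm_ring_1) = rev_sign a * rev_sign b * (-1) ^ (a * b)"
  by (induction b) (simp_all add: algebra_simps power_add)

lemma rev_sign_square: "(rev_sign m :: 'k::comm_ring_1) * rev_sign m = 1"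
proof (induction m)
  case (Suc m)
  have "(rev_sign (Suc m) :: 'k) * rev_sign (Suc m) = ((-1) ^ m * (-1) ^ m) * (rev_sign m * rev_sign m)"
    by (simp add: algebra_simps)
  then show ?case using Suc by simp
qed simp

lemma ext_wedge_basis_left:
  "ext_wedge n (ext_basis S) y R = (if S \<subseteq> {..<n}
     then (\<Sum>T\<in>Pow {..<n}. if S \<union> T = R then y T * ext_sign S T else 0) else 0)"
proof -
  have "ext_wedge n (ext_basis S) y R = (\<Sum>S'\<in>Pow {..<n}. if S' = S
      then (\<Sum>T\<in>Pow {..<n}. if S \<union> T = R then y T * ext_sign S T else 0) else 0)"
    unfolding ext_wedge_def ext_basis_def by (rule sum.cong[OF refl]) (auto cong: if_cong)
  then show ?thesis by (simp add: sum.delta)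
qed

lemma ext_wedge_basis:
  "ext_wedge n (ext_basis S) (ext_basis T) = (\<lambda>R.
     if S \<subseteq> {..<n} \<and> T \<subseteq> {..<n} \<and> S \<union> T = R then (ext_sign S T :: 'k::comm_ring_1) else 0)"
proof (rule ext)
  fix R
  have "(\<Sum>T'\<in>Pow {..<n}. if S \<union> T' = R then ext_basis T T' * ext_sign S T' else 0)
     = (\<Sum>T'\<in>Pow {..<n}. if T' = T then (if S \<union> T = R then (ext_sign S T :: 'k) else 0) else 0)"
    by (rule sum.cong) (auto simp: ext_basis_def)
  then show "ext_wedge n (ext_basis S) (ext_basis T) R
      = (if S \<subseteq> {..<n} \<and> T \<subseteq> {..<n} \<and> S \<union> T = R then (ext_sign S T :: 'k) else 0)"
    by (simp add: ext_wedge_basis_left sum.delta)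
qed

lemma ext_wedge_scale_right: "ext_wedge n x (\<lambda>R. c * y R) = (\<lambda>R. c * ext_wedge n x y R)"
  unfolding ext_wedge_def by (auto simp: sum_distrib_left intro!: sum.cong ext)

lemma ext_wedge_minus_left: "ext_wedge n (\<lambda>R. - x R) y = (\<lambda>R. - ext_wedge n x y R)"
  unfolding ext_wedge_def sum_negf[symmetric] by (intro ext sum.cong refl) auto

lemma ext_wedge_nonzero:
  fixes x y :: "nat set \<Rightarrow> 'k::comm_ring_1"
  assumes "ext_wedge n x y R \<noteq> 0"
  shows "\<exists>S T. S \<subseteq> {..<n} \<and> T \<subseteq> {..<n} \<and> S \<union> T = R \<and> S \<inter> T = {} \<and> x S \<noteq> 0 \<and> y T \<noteq> 0"
proof (rule ccontr)
  assume none: "\<not> ?thesis"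
  have "x S * y T * ext_sign S T = 0" if "S \<subseteq> {..<n}" "T \<subseteq> {..<n}" "S \<union> T = R" for S T
  proof -
    have "S \<inter> T = {} \<longrightarrow> x S = 0 \<or> y T = 0" using none that by blast
    then show ?thesis using ext_sign_nonzero_iff[of S T, where 'k='k] by auto
  qed
  then have "ext_wedge n x y R = 0" unfolding ext_wedge_def by (intro sum.neutral ballI) auto
  with assms show False by simp
qed

section \<open>The action of \<open>G\<close> on the exterior algebra\<close>

locale finite_supergroup =
  fixes \<rho> :: "'g::{ab_group_add,finite} \<Rightarrow> nat \<Rightarrow> nat \<Rightarrow> 'k::comm_ring_1"
    and u :: 'g and n :: nat
  assumes u_add_u: "u + u = 0"
    and rep: "is_rep n \<rho>"
    and rep_u: "\<forall>i<n. \<forall>j<n. \<rho> u i j = (if i = j then -1 else 0)"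
begin

abbreviation act_list :: "'g \<Rightarrow> nat list \<Rightarrow> nat set \<Rightarrow> 'k" where
  "act_list g xs \<equiv> foldr (\<lambda>i acc. ext_wedge n (ext_gen_act n \<rho> g i) acc) xs (ext_basis {})"

lemma ext_act_basis_eq_act_list: "ext_act_basis n \<rho> g T = act_list g (sorted_list_of_set T)"
  by (simp add: ext_act_basis_def)

lemma gen_act_zero: "i < n \<Longrightarrow> ext_gen_act n \<rho> 0 i = ext_basis {i}"
proof (rule ext)
  fix R assume i: "i < n"
  have "ext_gen_act n \<rho> 0 i R = (\<Sum>j<n. if j = i then ext_basis {j} R else 0)"
    unfolding ext_gen_act_def using i rep by (intro sum.cong) (auto simp: is_rep_def)
  also have "\<dots> = ext_basis {i} R" using i by (simp add: sum.delta)
  finally show "ext_gen_act n \<rho> 0 i R = ext_basis {i} R" .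
qed

lemma gen_act_add_u: "i < n \<Longrightarrow> ext_gen_act n \<rho> (g + u) i = (\<lambda>R. - ext_gen_act n \<rho> g i R)"
proof (rule ext)
  fix R assume i: "i < n"
  have "\<rho> (g + u) j i = - \<rho> g j i" if j: "j < n" for j
  proof -
    have "\<rho> (g + u) j i = (\<Sum>l<n. \<rho> g j l * \<rho> u l i)" using i j rep by (simp add: is_rep_def)
    also have "\<dots> = (\<Sum>l<n. if l = i then - \<rho> g j l else 0)"
      using i rep_u by (intro sum.cong) auto
    also have "\<dots> = - \<rho> g j i" using i by (simp add: sum.delta)
    finally show ?thesis .
  qed
  then show "ext_gen_act n \<rho> (g + u) i R = - ext_gen_act n \<rho> g i R"
    unfolding ext_gen_act_def by (simp add: sum_negf[symmetric])
qed

lemma gen_act_nonzero: "ext_gen_act n \<rho> g i R \<noteq> 0 \<Longrightarrow> \<exists>j<n. R = {j}"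
  unfolding ext_gen_act_def by (metis (no_types, lifting) ext_basis_def lessThan_iff
      mult_zero_right sum.neutral)

lemma act_list_add_u:
  "set xs \<subseteq> {..<n} \<Longrightarrow> act_list (g + u) xs = (\<lambda>R. (-1) ^ length xs * act_list g xs R)"
  by (induction xs) (simp_all add: gen_act_add_u ext_wedge_minus_left ext_wedge_scale_right)

lemma act_list_zero:
  "sorted xs \<Longrightarrow> distinct xs \<Longrightarrow> set xs \<subseteq> {..<n} \<Longrightarrow> act_list 0 xs = ext_basis (set xs)"
proof (induction xs)
  case (Cons x xs)
  then have x: "x < n" and xs: "\<forall>y\<in>set xs. x < y" using le_neq_trans by auto
  have sign: "(ext_sign {x} (set xs) :: 'k) = 1"
    using ext_sign_insert_left_min[of x "set xs" "{}"] xs by auto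
  have "act_list 0 (x # xs) = ext_wedge n (ext_basis {x}) (ext_basis (set xs))"
    using Cons x by (simp add: gen_act_zero)
  also have "\<dots> = ext_basis (set (x # xs))"
    using Cons x sign unfolding ext_wedge_basis by (auto simp: ext_basis_def)
  finally show ?case .
qed simp

lemma act_list_nonzero: "act_list g xs R \<noteq> 0 \<Longrightarrow> card R = length xs"
proof (induction xs arbitrary: R)
  case Nil then show ?case by (auto simp: ext_basis_def split: if_splits)
next
  case (Cons x xs)
  from Cons.prems have "ext_wedge n (ext_gen_act n \<rho> g x) (act_list g xs) R \<noteq> 0" by simp
  from ext_wedge_nonzero[OF this] obtain S T where
    ST: "S \<subseteq> {..<n}" "T \<subseteq> {..<n}" "S \<union> T = R" "S \<inter> T = {}"
        "ext_gen_act n \<rho> g x S \<noteq> 0" "act_list g xs T \<noteq> 0" by blast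
  from gen_act_nonzero[OF ST(5)] obtain j where "j < n" "S = {j}" by blast
  moreover have "card T = length xs" using Cons.IH[OF ST(6)] by simp
  moreover have "finite T" using ST(2) finite_subset by blast
  ultimately show ?case using ST by (auto simp: card_insert_if)
qed

lemma ext_act_basis_add_u:
  "T \<subseteq> {..<n} \<Longrightarrow> ext_act_basis n \<rho> (g + u) T = (\<lambda>R. (-1) ^ card T * ext_act_basis n \<rho> g T R)"
  using act_list_add_u[of "sorted_list_of_set T" g] finite_subset[of T "{..<n}"]
  by (auto simp: ext_act_basis_eq_act_list)

lemma ext_act_basis_zero: "T \<subseteq> {..<n} \<Longrightarrow> ext_act_basis n \<rho> 0 T = ext_basis T"
  using act_list_zero[of "sorted_list_of_set T"] finite_subset[of T "{..<n}"]
  by (auto simp: ext_act_basis_eq_act_list)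

lemma ext_act_basis_u: "T \<subseteq> {..<n} \<Longrightarrow> ext_act_basis n \<rho> u T = (\<lambda>R. (-1) ^ card T * ext_basis T R)"
  using ext_act_basis_add_u[of T 0] ext_act_basis_zero[of T] by simp

lemma ext_act_basis_empty: "ext_act_basis n \<rho> g {} = ext_basis {}"
  by (simp add: ext_act_basis_def)

lemma wedge_act_basis_nonzero:
  assumes "S \<subseteq> {..<n}" "T \<subseteq> {..<n}" "ext_wedge n (ext_basis S) (ext_act_basis n \<rho> g T) R \<noteq> 0"
  shows "card R = card S + card T"
proof -
  from ext_wedge_nonzero[OF assms(3)] obtain S' T' where
    ST: "S' \<subseteq> {..<n}" "T' \<subseteq> {..<n}" "S' \<union> T' = R" "S' \<inter> T' = {}"
        "ext_basis S S' \<noteq> (0::'k)" "ext_act_basis n \<rho> g T T' \<noteq> 0" by blast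
  have "S' = S" using ST(5) by (auto simp: ext_basis_def split: if_splits)
  moreover have "card T' = card T"
    using act_list_nonzero ST(6) assms(2) finite_subset[of T "{..<n}"]
    by (fastforce simp: ext_act_basis_eq_act_list)
  moreover have "finite S'" "finite T'" using ST(1,2) finite_subset by auto
  ultimately show ?thesis using ST card_Un_disjoint[of S' T'] by (auto simp flip: ST(3))
qed

text \<open>\<open>u_pow m\<close> is \<open>u\<^sup>m\<close>, the group being written additively.\<close>

definition u_pow :: "nat \<Rightarrow> 'g" where
  "u_pow m = (if even m then 0 else u)"

lemma u_pow_add: "u_pow (a + b) = u_pow a + u_pow b"
  using u_add_u by (auto simp: u_pow_def)

lemma u_pow_add_self [simp]: "u_pow m + u_pow m = 0"
  using u_add_u by (auto simp: u_pow_def)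

lemma add_u_pow_add_u_pow [simp]: "g + u_pow m + u_pow m = g"
  by (simp add: add.assoc u_pow_add_self)

lemma u_pow_Suc: "u_pow (Suc m) = u_pow m + u"
  using u_add_u by (auto simp: u_pow_def)

lemma ext_act_basis_add_u_pow:
  assumes "T \<subseteq> {..<n}"
  shows "ext_act_basis n \<rho> (g + u_pow m) T = (\<lambda>R. (-1) ^ (m * card T) * ext_act_basis n \<rho> g T R)"
  using ext_act_basis_add_u[OF assms]
  by (cases "even m") (simp_all add: u_pow_def power_mult)

abbreviation basis_mul :: "nat set \<Rightarrow> 'g \<Rightarrow> nat set \<Rightarrow> 'g \<Rightarrow> nat set \<Rightarrow> 'g \<Rightarrow> 'k" where
  "basis_mul P p Q q \<equiv> sa_mul n \<rho> (sa_basis P p) (sa_basis Q q)"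

lemma sa_mul_basis_right:
  "sa_mul n \<rho> a (sa_basis Q q) = (\<lambda>R k. if Q \<subseteq> {..<n} then (\<Sum>S\<in>Pow {..<n}. \<Sum>g\<in>UNIV.
      if g + q = k then a S g * ext_wedge n (ext_basis S) (ext_act_basis n \<rho> g Q) R else 0) else 0)"
proof (intro ext)
  fix R k
  have "sa_mul n \<rho> a (sa_basis Q q) R k = (\<Sum>S\<in>Pow {..<n}. \<Sum>g\<in>UNIV.
      \<Sum>T\<in>Pow {..<n}. \<Sum>h\<in>UNIV. if T = Q \<and> h = q then
         (if g + q = k then a S g * ext_wedge n (ext_basis S) (ext_act_basis n \<rho> g Q) R else 0) else 0)"
    unfolding sa_mul_def by (intro sum.cong refl) (auto simp: sa_basis_def)
  then show "sa_mul n \<rho> a (sa_basis Q q) R k = (if Q \<subseteq> {..<n} then (\<Sum>S\<in>Pow {..<n}. \<Sum>g\<in>UNIV.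
      if g + q = k then a S g * ext_wedge n (ext_basis S) (ext_act_basis n \<rho> g Q) R else 0) else 0)"
    by (simp add: sum_pair_delta)
qed

lemma basis_mul_eq:
  "basis_mul P p Q q = (\<lambda>R k. if P \<subseteq> {..<n} \<and> Q \<subseteq> {..<n} \<and> p + q = k
     then ext_wedge n (ext_basis P) (ext_act_basis n \<rho> p Q) R else 0)"
proof (intro ext)
  fix R k
  have "(\<Sum>S\<in>Pow {..<n}. \<Sum>g\<in>UNIV. if g + q = k
        then sa_basis P p S g * ext_wedge n (ext_basis S) (ext_act_basis n \<rho> g Q) R else 0)
     = (\<Sum>S\<in>Pow {..<n}. \<Sum>g\<in>(UNIV::'g set). if S = P \<and> g = p
        then (if p + q = k then ext_wedge n (ext_basis P) (ext_act_basis n \<rho> p Q) R else 0) else 0)"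
    by (intro sum.cong refl) (auto simp: sa_basis_def)
  then show "basis_mul P p Q q R k = (if P \<subseteq> {..<n} \<and> Q \<subseteq> {..<n} \<and> p + q = k
      then ext_wedge n (ext_basis P) (ext_act_basis n \<rho> p Q) R else 0)"
    by (simp add: sa_mul_basis_right sum_pair_delta)
qed

lemma basis_mul_zero:
  "basis_mul P 0 Q q = (\<lambda>R k. if P \<subseteq> {..<n} \<and> Q \<subseteq> {..<n} \<and> q = k \<and> P \<union> Q = R
     then ext_sign P Q else 0)"
  by (intro ext) (auto simp: basis_mul_eq ext_act_basis_zero ext_wedge_basis)

lemma basis_mul_u:
  "basis_mul P u Q q = (\<lambda>R k. if P \<subseteq> {..<n} \<and> Q \<subseteq> {..<n} \<and> u + q = k \<and> P \<union> Q = R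
     then (-1) ^ card Q * ext_sign P Q else 0)"
  by (intro ext) (auto simp: basis_mul_eq ext_act_basis_u ext_wedge_scale_right ext_wedge_basis)

lemma basis_mul_empty:
  "basis_mul P p {} q = (\<lambda>R k. if P \<subseteq> {..<n} \<and> p + q = k \<and> P = R then 1 else 0)"
  by (intro ext) (auto simp: basis_mul_eq ext_act_basis_empty ext_wedge_basis)

lemma sa_mul_grp_right:
  "sa_mul n \<rho> a (sa_grp q) = (\<lambda>R k. if R \<subseteq> {..<n} then a R (k - q) else 0)"
proof (intro ext)
  fix R k
  have "sa_mul n \<rho> a (sa_grp q) R k
      = (\<Sum>S\<in>Pow {..<n}. \<Sum>g\<in>UNIV. if S = R \<and> g = k - q then a S g else 0)"
    unfolding sa_grp_def sa_mul_basis_right ext_act_basis_empty ext_wedge_basis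
    by (auto simp: eq_diff_eq intro!: sum.cong)
  then show "sa_mul n \<rho> a (sa_grp q) R k = (if R \<subseteq> {..<n} then a R (k - q) else 0)"
    by (simp add: sum_pair_delta)
qed

lemma sa_vec_indicator:
  "i < n \<Longrightarrow> sa_vec n (\<lambda>j. if j = i then 1 else 0) = (sa_basis {i} 0 :: nat set \<Rightarrow> 'g \<Rightarrow> 'k)"
proof (intro ext)
  fix S g assume i: "i < n"
  have "(\<Sum>j<n. (if j = i then 1 else 0) * ext_basis {j} S)
      = (\<Sum>j<n. if j = i then ext_basis {j} S else 0 :: 'k)"
    by (rule sum.cong) auto
  also have "\<dots> = ext_basis {i} S" using i by (simp add: sum.delta)
  finally show "sa_vec n (\<lambda>j. if j = i then 1 else 0) S g = (sa_basis {i} 0 S g :: 'k)"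
    by (auto simp: sa_vec_def sa_basis_def ext_basis_def)
qed

lemma basis_mul_insert_min:
  assumes i: "i < n" and T: "T \<subseteq> {..<n}" and min: "\<forall>j\<in>T. i < j"
  shows "basis_mul {i} 0 T g = sa_basis (insert i T) g"
proof -
  have "(ext_sign {i} T :: 'k) = 1"
    using ext_sign_insert_left_min[of i T "{}"] min by auto
  then show ?thesis unfolding basis_mul_zero using i T by (intro ext) (auto simp: sa_basis_def)
qed

section \<open>The twist map\<close>

text \<open>Since \<open>u\<close> anticommutes with every \<open>e\<^sub>i\<close>, the prescribed map sends
  \<open>e\<^sub>i\<^sub>1 \<cdots> e\<^sub>i\<^sub>k g\<close> to \<open>e\<^sub>i\<^sub>1 u \<cdots> e\<^sub>i\<^sub>k u g = rev_sign k \<cdot> e\<^sub>i\<^sub>1 \<cdots> e\<^sub>i\<^sub>k u\<^sup>k g\<close>;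
  on coefficient functions this is the following map.\<close>

definition twist :: "(nat set \<Rightarrow> 'g \<Rightarrow> 'k) \<Rightarrow> nat set \<Rightarrow> 'g \<Rightarrow> 'k" where
  "twist a = (\<lambda>R k. rev_sign (card R) * a R (k + u_pow (card R)))"

lemma twist_basis:
  "twist (sa_basis S g) = (\<lambda>R k. if R = S \<and> k + u_pow (card S) = g then rev_sign (card S) else 0)"
  by (intro ext) (auto simp: twist_def sa_basis_def)

lemma twist_grp: "twist (sa_grp g) = sa_grp g"
  unfolding twist_basis sa_grp_def by (intro ext) (auto simp: u_pow_def sa_basis_def)

lemma twist_one: "twist sa_one = sa_one"
  using twist_grp[of 0] by (simp add: sa_one_def sa_grp_def)

lemma twist_twist: "twist (twist a) = a"
  by (simp add: twist_def mult.assoc[symmetric] rev_sign_square)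

lemma twist_carrier: "a \<in> sa_carrier n \<Longrightarrow> twist a \<in> sa_carrier n"
  by (simp add: sa_carrier_def twist_def)

lemma bij_betw_twist: "bij_betw twist (sa_carrier n) (sa_carrier n)"
  by (rule bij_betw_byWitness[where f'=twist]) (auto simp: twist_twist twist_carrier)

lemma twist_add: "twist (sa_add a b) = sa_add (twist a) (twist b)"
  by (simp add: twist_def sa_add_def algebra_simps)

lemma twist_smul: "twist (sa_smul c a) = sa_smul c (twist a)"
  by (simp add: twist_def sa_smul_def algebra_simps)

lemma twist_eps: "sa_eps (twist a) = sa_eps a"
  by (simp add: twist_def sa_eps_def u_pow_def)

lemma twist_vec: "twist (sa_vec n x) = sa_mul n \<rho> (sa_vec n x) (sa_grp u)"
proof (intro ext)
  fix R k
  show "twist (sa_vec n x) R k = sa_mul n \<rho> (sa_vec n x) (sa_grp u) R k"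
  proof (cases "\<exists>i<n. R = {i}")
    case True
    then obtain i where i: "i < n" "R = {i}" by blast
    have "(\<Sum>j<n. x j * ext_basis {j} R) = x i"
      using i by (simp add: ext_basis_def if_distrib sum.delta cong: if_cong)
    moreover have "(k + u = 0) = (k - u = 0)"
      using u_add_u by (metis add_diff_cancel diff_add_cancel add.commute add_eq_iff_eq_add_self_inverse)
    ultimately show ?thesis using i by (simp add: twist_def sa_mul_grp_right sa_vec_def u_pow_def)
  next
    case False
    then have "(\<Sum>j<n. x j * ext_basis {j} R) = 0"
      by (intro sum.neutral) (auto simp: ext_basis_def)
    then show ?thesis by (simp add: twist_def sa_mul_grp_right sa_vec_def)
  qed
qed

lemma twist_mul_summand:
  fixes R :: "nat set" and k :: 'g
  defines "W \<equiv> \<lambda>S g T. ext_wedge n (ext_basis S) (ext_act_basis n \<rho> g T) R"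
  assumes S: "S \<subseteq> {..<n}" and T: "T \<subseteq> {..<n}"
  shows "(if g + u_pow (card S) + (h + u_pow (card T)) = k
      then twist a S (g + u_pow (card S)) * twist b T (h + u_pow (card T)) * W S (g + u_pow (card S)) T
      else 0)
    = rev_sign (card R) * (if g + h = k + u_pow (card R) then a S g * b T h * W S g T else 0)"
proof (cases "W S g T = 0")
  case True
  then have "W S (g + u_pow (card S)) T = 0"
    by (simp add: W_def ext_act_basis_add_u_pow[OF T] ext_wedge_scale_right)
  then show ?thesis using True by simp
next
  case False
  then have card_R: "card R = card S + card T"
    using wedge_act_basis_nonzero[OF S T] by (auto simp: W_def)
  have "W S (g + u_pow (card S)) T = (-1) ^ (card S * card T) * W S g T"
    by (simp add: W_def ext_act_basis_add_u_pow[OF T] ext_wedge_scale_right)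
  moreover have "(g + u_pow (card S) + (h + u_pow (card T)) = k) = (g + h = k + u_pow (card R))"
  proof -
    have "g + u_pow (card S) + (h + u_pow (card T)) = (g + h) + u_pow (card R)"
      by (simp add: card_R u_pow_add add_ac)
    then show ?thesis by (simp only: add_eq_iff_eq_add_self_inverse[OF u_pow_add_self])
  qed
  ultimately show ?thesis
    unfolding card_R twist_def by (simp add: rev_sign_add u_pow_add_self algebra_simps)
qed

lemma twist_mul: "twist (sa_mul n \<rho> a b) = sa_mul n \<rho> (twist a) (twist b)"
proof (intro ext)
  fix R k
  define W where "W S g T = ext_wedge n (ext_basis S) (ext_act_basis n \<rho> g T) R" for S g T
  have "sa_mul n \<rho> (twist a) (twist b) R k = (\<Sum>S\<in>Pow {..<n}. \<Sum>g\<in>UNIV. \<Sum>T\<in>Pow {..<n}. \<Sum>h\<in>UNIV.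
      if g + h = k then twist a S g * twist b T h * W S g T else 0)"
    by (simp add: sa_mul_def W_def cong: if_cong)
  also have "\<dots> = (\<Sum>S\<in>Pow {..<n}. \<Sum>g\<in>UNIV. \<Sum>T\<in>Pow {..<n}. \<Sum>h\<in>UNIV.
      if g + u_pow (card S) + (h + u_pow (card T)) = k
      then twist a S (g + u_pow (card S)) * twist b T (h + u_pow (card T)) * W S (g + u_pow (card S)) T
      else 0)"
    by (rule sum_UNIV_translate_nested)
  also have "\<dots> = (\<Sum>S\<in>Pow {..<n}. \<Sum>g\<in>UNIV. \<Sum>T\<in>Pow {..<n}. \<Sum>h\<in>UNIV.
      rev_sign (card R) * (if g + h = k + u_pow (card R) then a S g * b T h * W S g T else 0))"
    unfolding W_def by (intro sum.cong refl twist_mul_summand) auto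
  also have "\<dots> = twist (sa_mul n \<rho> a b) R k"
    by (simp add: twist_def sa_mul_def W_def sum_distrib_left cong: if_cong)
  finally show "twist (sa_mul n \<rho> a b) R k = sa_mul n \<rho> (twist a) (twist b) R k" by simp
qed

lemma sa_alg_hom_twist: "sa_alg_hom n \<rho> twist"
  by (simp add: sa_alg_hom_def twist_carrier twist_add twist_smul twist_mul twist_one)

section \<open>Uniqueness\<close>

lemma sa_alg_hom_basis_eq_twist:
  assumes hom: "sa_alg_hom n \<rho> \<phi>"
    and vec: "\<forall>x. \<phi> (sa_vec n x) = sa_mul n \<rho> (sa_vec n x) (sa_grp u)"
    and grp: "\<forall>g. \<phi> (sa_grp g) = sa_grp g"
    and S: "S \<subseteq> {..<n}"
  shows "\<phi> (sa_basis S g) = twist (sa_basis S g)"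
proof -
  have "finite S" using S finite_subset by blast
  then show ?thesis using S
  proof (induction S rule: finite_linorder_min_induct)
    case empty
    then show ?case using grp twist_grp[of g] by (simp add: sa_grp_def)
  next
    case (insert b A)
    have b: "b < n" and A: "A \<subseteq> {..<n}" using insert by auto
    have e: "sa_basis (insert b A) g = basis_mul {b} 0 A g"
      using basis_mul_insert_min[OF b A] insert by simp
    have "\<phi> (sa_basis {b} 0) = twist (sa_basis {b} 0)"
      using vec twist_vec sa_vec_indicator[OF b] by metis
    moreover have "\<phi> (basis_mul {b} 0 A g) = sa_mul n \<rho> (\<phi> (sa_basis {b} 0)) (\<phi> (sa_basis A g))"
      using hom b A by (simp add: sa_alg_hom_def sa_basis_carrier)
    ultimately show ?case
      unfolding e using insert.IH[OF A] by (simp add: twist_mul)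
  qed
qed

lemma sa_alg_hom_eq_twist:
  assumes "sa_alg_hom n \<rho> \<phi>"
    and "\<forall>x. \<phi> (sa_vec n x) = sa_mul n \<rho> (sa_vec n x) (sa_grp u)"
    and "\<forall>g. \<phi> (sa_grp g) = sa_grp g"
    and "a \<in> sa_carrier n"
  shows "\<phi> a = twist a"
  using assms(1) sa_alg_hom_twist unfolding sa_alg_hom_def
  by (intro sa_linear_eqI[where \<phi>=\<phi> and \<psi>=twist,
        OF _ _ _ _ sa_alg_hom_basis_eq_twist[OF assms(1-3)] assms(4)]) auto

section \<open>The coproduct\<close>

lemma sa2_mul_add_left:
  "sa2_mul n \<rho> (\<lambda>A a B b. X1 A a B b + X2 A a B b) Y
   = (\<lambda>A a B b. sa2_mul n \<rho> X1 Y A a B b + sa2_mul n \<rho> X2 Y A a B b)"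
  unfolding sa2_mul_def by (simp add: sum.distrib distrib_right)

lemma sa2_mul_tensor_basis_left:
  "sa2_mul n \<rho> (sa_tensor (sa_basis P1 p1) (sa_basis P2 p2)) Y = (\<lambda>S1 g1 S2 g2.
     if P1 \<subseteq> {..<n} \<and> P2 \<subseteq> {..<n} then
     (\<Sum>Q1\<in>Pow {..<n}. \<Sum>q1\<in>UNIV. \<Sum>Q2\<in>Pow {..<n}. \<Sum>q2\<in>UNIV.
        Y Q1 q1 Q2 q2 * basis_mul P1 p1 Q1 q1 S1 g1 * basis_mul P2 p2 Q2 q2 S2 g2) else 0)"
proof (intro ext)
  fix S1 g1 S2 g2
  let ?G = "\<lambda>P1 p1 P2 p2. (\<Sum>Q1\<in>Pow {..<n}. \<Sum>q1\<in>UNIV. \<Sum>Q2\<in>Pow {..<n}. \<Sum>q2\<in>UNIV.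
        Y Q1 q1 Q2 q2 * basis_mul P1 p1 Q1 q1 S1 g1 * basis_mul P2 p2 Q2 q2 S2 g2)"
  have "sa2_mul n \<rho> (sa_tensor (sa_basis P1 p1) (sa_basis P2 p2)) Y S1 g1 S2 g2
     = (\<Sum>P1'\<in>Pow {..<n}. \<Sum>p1'\<in>UNIV. \<Sum>P2'\<in>Pow {..<n}. \<Sum>p2'\<in>UNIV.
         if P1' = P1 \<and> p1' = p1 \<and> P2' = P2 \<and> p2' = p2 then ?G P1 p1 P2 p2 else 0)"
    unfolding sa2_mul_def by (intro sum.cong refl) (auto simp: sa_tensor_def sa_basis_def)
  also have "\<dots> = (if P1 \<subseteq> {..<n} \<and> P2 \<subseteq> {..<n} then ?G P1 p1 P2 p2 else 0)"
    by (rule sum4_delta)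
  finally show "sa2_mul n \<rho> (sa_tensor (sa_basis P1 p1) (sa_basis P2 p2)) Y S1 g1 S2 g2
     = (if P1 \<subseteq> {..<n} \<and> P2 \<subseteq> {..<n} then ?G P1 p1 P2 p2 else 0)" .
qed

lemma sa2_mul_tensor_basis_right:
  "sa2_mul n \<rho> X (sa_tensor (sa_basis Q1 q1) (sa_basis Q2 q2)) = (\<lambda>S1 g1 S2 g2.
     if Q1 \<subseteq> {..<n} \<and> Q2 \<subseteq> {..<n} then
     (\<Sum>P1\<in>Pow {..<n}. \<Sum>p1\<in>UNIV. \<Sum>P2\<in>Pow {..<n}. \<Sum>p2\<in>UNIV.
        X P1 p1 P2 p2 * basis_mul P1 p1 Q1 q1 S1 g1 * basis_mul P2 p2 Q2 q2 S2 g2) else 0)"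
proof (intro ext)
  fix S1 g1 S2 g2
  let ?C = "Q1 \<subseteq> {..<n} \<and> Q2 \<subseteq> {..<n}"
  have inner: "(\<Sum>Q1'\<in>Pow {..<n}. \<Sum>q1'\<in>UNIV. \<Sum>Q2'\<in>Pow {..<n}. \<Sum>q2'\<in>UNIV.
        X P1 p1 P2 p2 * sa_tensor (sa_basis Q1 q1) (sa_basis Q2 q2) Q1' q1' Q2' q2'
        * basis_mul P1 p1 Q1' q1' S1 g1 * basis_mul P2 p2 Q2' q2' S2 g2)
    = (if ?C then X P1 p1 P2 p2 * basis_mul P1 p1 Q1 q1 S1 g1 * basis_mul P2 p2 Q2 q2 S2 g2 else 0)"
    for P1 p1 P2 p2
  proof -
    have "(\<Sum>Q1'\<in>Pow {..<n}. \<Sum>q1'\<in>UNIV. \<Sum>Q2'\<in>Pow {..<n}. \<Sum>q2'\<in>UNIV.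
          X P1 p1 P2 p2 * sa_tensor (sa_basis Q1 q1) (sa_basis Q2 q2) Q1' q1' Q2' q2'
          * basis_mul P1 p1 Q1' q1' S1 g1 * basis_mul P2 p2 Q2' q2' S2 g2)
      = (\<Sum>Q1'\<in>Pow {..<n}. \<Sum>q1'\<in>UNIV. \<Sum>Q2'\<in>Pow {..<n}. \<Sum>q2'\<in>UNIV.
          if Q1' = Q1 \<and> q1' = q1 \<and> Q2' = Q2 \<and> q2' = q2
          then X P1 p1 P2 p2 * basis_mul P1 p1 Q1' q1' S1 g1 * basis_mul P2 p2 Q2' q2' S2 g2 else 0)"
      by (intro sum.cong refl) (auto simp: sa_tensor_def sa_basis_def)
    then show ?thesis by (simp only: sum4_delta)
  qed
  have "sa2_mul n \<rho> X (sa_tensor (sa_basis Q1 q1) (sa_basis Q2 q2)) S1 g1 S2 g2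
     = (\<Sum>P1\<in>Pow {..<n}. \<Sum>p1\<in>UNIV. \<Sum>P2\<in>Pow {..<n}. \<Sum>p2\<in>UNIV.
        if ?C then X P1 p1 P2 p2 * basis_mul P1 p1 Q1 q1 S1 g1 * basis_mul P2 p2 Q2 q2 S2 g2 else 0)"
    unfolding sa2_mul_def inner ..
  also have "\<dots> = (if ?C then (\<Sum>P1\<in>Pow {..<n}. \<Sum>p1\<in>UNIV. \<Sum>P2\<in>Pow {..<n}. \<Sum>p2\<in>UNIV.
        X P1 p1 P2 p2 * basis_mul P1 p1 Q1 q1 S1 g1 * basis_mul P2 p2 Q2 q2 S2 g2) else 0)"
  proof (cases ?C)
    case False
    then show ?thesis by (simp only: if_not_P[OF False] if_False sum.neutral_const)
  qed simp
  finally show "sa2_mul n \<rho> X (sa_tensor (sa_basis Q1 q1) (sa_basis Q2 q2)) S1 g1 S2 g2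
     = (if ?C then (\<Sum>P1\<in>Pow {..<n}. \<Sum>p1\<in>UNIV. \<Sum>P2\<in>Pow {..<n}. \<Sum>p2\<in>UNIV.
        X P1 p1 P2 p2 * basis_mul P1 p1 Q1 q1 S1 g1 * basis_mul P2 p2 Q2 q2 S2 g2) else 0)" .
qed

lemma sa_Delta_gen_eq:
  assumes "x < n"
  shows "(sa_Delta_gen n u x :: nat set \<Rightarrow> 'g \<Rightarrow> nat set \<Rightarrow> 'g \<Rightarrow> 'k) = (\<lambda>A a B b.
     sa_tensor (sa_basis {x} 0) (sa_basis {} 0) A a B b + sa_tensor (sa_basis {} u) (sa_basis {x} 0) A a B b)"
  unfolding sa_Delta_gen_def sa_vec_indicator[OF assms] by (simp add: sa_one_def sa_grp_def)

lemma sa2_mul_Delta_gen: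
  assumes x: "x < n"
  shows "sa2_mul n \<rho> (sa_Delta_gen n u x) Y S1 g1 S2 g2 =
      (if x \<in> S1 \<and> S1 \<subseteq> {..<n} \<and> S2 \<subseteq> {..<n}
       then ext_sign {x} (S1 - {x}) * Y (S1 - {x}) g1 S2 g2 else 0)
    + (if x \<in> S2 \<and> S1 \<subseteq> {..<n} \<and> S2 \<subseteq> {..<n}
       then (-1) ^ card S1 * ext_sign {x} (S2 - {x}) * Y S1 (g1 - u) (S2 - {x}) g2 else 0)"
proof -
  have left: "(\<Sum>Q1\<in>Pow {..<n}. \<Sum>q1\<in>UNIV. \<Sum>Q2\<in>Pow {..<n}. \<Sum>q2\<in>UNIV.
        Y Q1 q1 Q2 q2 * basis_mul {x} 0 Q1 q1 S1 g1 * basis_mul {} 0 Q2 q2 S2 g2)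
     = (if S1 - {x} \<subseteq> {..<n} \<and> S2 \<subseteq> {..<n} then Y (S1 - {x}) g1 S2 g2
          * basis_mul {x} 0 (S1 - {x}) g1 S1 g1 * basis_mul {} 0 S2 g2 S2 g2 else 0)"
  proof (rule sum4_single)
    fix Q1 q1 Q2 q2
    assume "Y Q1 q1 Q2 q2 * basis_mul {x} 0 Q1 q1 S1 g1 * basis_mul {} 0 Q2 q2 S2 g2 \<noteq> 0"
    then have "basis_mul {x} 0 Q1 q1 S1 g1 \<noteq> 0" "basis_mul {} 0 Q2 q2 S2 g2 \<noteq> 0" by auto
    then show "Q1 = S1 - {x} \<and> q1 = g1 \<and> Q2 = S2 \<and> q2 = g2"
      by (auto simp: basis_mul_zero ext_sign_nonzero_iff split: if_splits)
  qed
  have right: "(\<Sum>Q1\<in>Pow {..<n}. \<Sum>q1\<in>UNIV. \<Sum>Q2\<in>Pow {..<n}. \<Sum>q2\<in>UNIV.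
        Y Q1 q1 Q2 q2 * basis_mul {} u Q1 q1 S1 g1 * basis_mul {x} 0 Q2 q2 S2 g2)
     = (if S1 \<subseteq> {..<n} \<and> S2 - {x} \<subseteq> {..<n} then Y S1 (g1 - u) (S2 - {x}) g2
          * basis_mul {} u S1 (g1 - u) S1 g1 * basis_mul {x} 0 (S2 - {x}) g2 S2 g2 else 0)"
  proof (rule sum4_single)
    fix Q1 q1 Q2 q2
    assume "Y Q1 q1 Q2 q2 * basis_mul {} u Q1 q1 S1 g1 * basis_mul {x} 0 Q2 q2 S2 g2 \<noteq> 0"
    then have "basis_mul {} u Q1 q1 S1 g1 \<noteq> 0" "basis_mul {x} 0 Q2 q2 S2 g2 \<noteq> 0" by auto
    then show "Q1 = S1 \<and> q1 = g1 - u \<and> Q2 = S2 - {x} \<and> q2 = g2"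
      by (auto simp: basis_mul_u basis_mul_zero ext_sign_nonzero_iff algebra_simps split: if_splits)
  qed
  show ?thesis
    unfolding sa_Delta_gen_eq[OF x] sa2_mul_add_left sa2_mul_tensor_basis_left left right
    using x by (auto simp: basis_mul_zero basis_mul_u insert_absorb)
qed

text \<open>The coefficient function of \<open>\<Delta>(e\<^sub>T) = \<Sum>\<^bsub>A \<union> B = T, A \<inter> B = {}\<^esub> ext_sign A B \<cdot> e\<^sub>A u\<^sup>|\<^sup>B\<^sup>| \<otimes> e\<^sub>B\<close>.\<close>

definition Delta_ext_basis :: "nat set \<Rightarrow> nat set \<Rightarrow> 'g \<Rightarrow> nat set \<Rightarrow> 'g \<Rightarrow> 'k" where
  "Delta_ext_basis T = (\<lambda>A a B b.
     if A \<union> B = T \<and> A \<inter> B = {} \<and> a = u_pow (card B) \<and> b = 0 then ext_sign A B else 0)"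

lemma Delta_ext_basis_empty: "sa_tensor sa_one sa_one = Delta_ext_basis {}"
  by (intro ext) (auto simp: Delta_ext_basis_def sa_tensor_def sa_one_def sa_basis_def u_pow_def)

lemma diff_u_eq_u_pow_card_remove:
  assumes "finite S" "x \<in> S"
  shows "(g - u = u_pow (card (S - {x}))) = (g = u_pow (card S))"
proof -
  have "u_pow (card S) = u_pow (card (S - {x})) + u"
    using card_Suc_Diff1[OF assms] u_pow_Suc by metis
  then show ?thesis by (auto simp: algebra_simps)
qed

context
  fixes x T
  assumes x: "x < n" and T: "T \<subseteq> {..<n}" and min: "\<forall>j\<in>T. x < j"
begin

lemma Delta_ext_basis_insert_left:
  assumes "x \<in> S1" "x \<notin> S2"
  shows "(if S1 \<subseteq> {..<n} \<and> S2 \<subseteq> {..<n}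
      then ext_sign {x} (S1 - {x}) * Delta_ext_basis T (S1 - {x}) g1 S2 g2 else 0)
    = Delta_ext_basis (insert x T) S1 g1 S2 g2"
proof (cases "S1 \<union> S2 = insert x T \<and> S1 \<inter> S2 = {} \<and> g1 = u_pow (card S2) \<and> g2 = 0")
  case True
  then have sub: "S1 - {x} \<subseteq> T" "S2 \<subseteq> T" using assms by auto
  have "S1 \<subseteq> {..<n}" "S2 \<subseteq> {..<n}" using True T x by auto
  have "(ext_sign {x} (S1 - {x}) :: 'k) = 1"
    using ext_sign_insert_left_min[of x "S1 - {x}" "{}"] sub min by auto
  moreover have "(ext_sign S1 S2 :: 'k) = ext_sign (S1 - {x}) S2"
    using ext_sign_insert_left_min[of x S2 "S1 - {x}"] sub min assms by (auto simp: insert_absorb)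
  moreover have "Delta_ext_basis T (S1 - {x}) g1 S2 g2 = ext_sign (S1 - {x}) S2"
    using True assms min by (auto simp: Delta_ext_basis_def)
  ultimately show ?thesis using True \<open>S1 \<subseteq> {..<n}\<close> \<open>S2 \<subseteq> {..<n}\<close>
    by (simp add: Delta_ext_basis_def)
next
  case False
  then have "Delta_ext_basis T (S1 - {x}) g1 S2 g2 = 0"
    using assms min by (auto simp: Delta_ext_basis_def)
  moreover have "Delta_ext_basis (insert x T) S1 g1 S2 g2 = 0"
    using False unfolding Delta_ext_basis_def by (rule if_not_P)
  ultimately show ?thesis by simp
qed

lemma Delta_ext_basis_insert_right:
  assumes "x \<notin> S1" "x \<in> S2"
  shows "(if S1 \<subseteq> {..<n} \<and> S2 \<subseteq> {..<n}
      then (-1) ^ card S1 * ext_sign {x} (S2 - {x}) * Delta_ext_basis T S1 (g1 - u) (S2 - {x}) g2 else 0)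
    = Delta_ext_basis (insert x T) S1 g1 S2 g2"
proof (cases "S1 \<union> S2 = insert x T \<and> S1 \<inter> S2 = {} \<and> g1 = u_pow (card S2) \<and> g2 = 0")
  case True
  then have sub: "S1 \<subseteq> T" "S2 - {x} \<subseteq> T" using assms by auto
  have "S1 \<subseteq> {..<n}" "S2 \<subseteq> {..<n}" using True T x by auto
  have fin: "finite S1" "finite S2" using True T by (auto intro: finite_subset)
  have "(ext_sign {x} (S2 - {x}) :: 'k) = 1"
    using ext_sign_insert_left_min[of x "S2 - {x}" "{}"] sub min by auto
  moreover have "(ext_sign S1 S2 :: 'k) = (-1) ^ card S1 * ext_sign S1 (S2 - {x})"
    using ext_sign_insert_right_min[of x S1 "S2 - {x}"] sub min assms fin by (auto simp: insert_absorb)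
  moreover have "Delta_ext_basis T S1 (g1 - u) (S2 - {x}) g2 = ext_sign S1 (S2 - {x})"
    using True assms min diff_u_eq_u_pow_card_remove[OF fin(2) assms(2), of g1]
    by (auto simp: Delta_ext_basis_def)
  ultimately show ?thesis using True \<open>S1 \<subseteq> {..<n}\<close> \<open>S2 \<subseteq> {..<n}\<close>
    by (simp add: Delta_ext_basis_def)
next
  case False
  have "Delta_ext_basis T S1 (g1 - u) (S2 - {x}) g2 = 0"
  proof (rule ccontr)
    assume "Delta_ext_basis T S1 (g1 - u) (S2 - {x}) g2 \<noteq> 0"
    then have c: "S1 \<union> (S2 - {x}) = T" "S1 \<inter> (S2 - {x}) = {}"
        "g1 - u = u_pow (card (S2 - {x}))" "g2 = 0"
      by (auto simp: Delta_ext_basis_def split: if_splits)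
    have "finite S2" using c(1) T finite_subset[of "S2 - {x}" "{..<n}"] by auto
    then have "g1 = u_pow (card S2)" using c(3) diff_u_eq_u_pow_card_remove[OF _ assms(2)] by simp
    with c False assms show False by auto
  qed
  moreover have "Delta_ext_basis (insert x T) S1 g1 S2 g2 = 0"
    using False unfolding Delta_ext_basis_def by (rule if_not_P)
  ultimately show ?thesis by simp
qed

lemma Delta_ext_basis_insert_min:
  "sa2_mul n \<rho> (sa_Delta_gen n u x) (Delta_ext_basis T) = Delta_ext_basis (insert x T)"
proof (intro ext)
  fix S1 g1 S2 g2
  have x_notin: "x \<notin> T" using min by auto
  consider "x \<in> S1" "x \<in> S2" | "x \<in> S1" "x \<notin> S2" | "x \<notin> S1" "x \<in> S2" | "x \<notin> S1" "x \<notin> S2"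
    by blast
  then show "sa2_mul n \<rho> (sa_Delta_gen n u x) (Delta_ext_basis T) S1 g1 S2 g2
      = Delta_ext_basis (insert x T) S1 g1 S2 g2"
  proof cases
    case 1
    then have "Delta_ext_basis T (S1 - {x}) g1 S2 g2 = 0" "Delta_ext_basis T S1 (g1 - u) (S2 - {x}) g2 = 0"
        "Delta_ext_basis (insert x T) S1 g1 S2 g2 = 0"
      using x_notin unfolding Delta_ext_basis_def by auto
    then show ?thesis by (simp add: sa2_mul_Delta_gen[OF x])
  next
    case 2
    then show ?thesis using Delta_ext_basis_insert_left by (simp add: sa2_mul_Delta_gen[OF x])
  next
    case 3
    then show ?thesis using Delta_ext_basis_insert_right by (simp add: sa2_mul_Delta_gen[OF x])
  next
    case 4
    then show ?thesis by (auto simp: sa2_mul_Delta_gen[OF x] Delta_ext_basis_def)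
  qed
qed

end

lemma Delta_ext_basis_foldr:
  "sorted xs \<Longrightarrow> distinct xs \<Longrightarrow> set xs \<subseteq> {..<n} \<Longrightarrow>
    foldr (\<lambda>i acc. sa2_mul n \<rho> (sa_Delta_gen n u i) acc) xs (sa_tensor sa_one sa_one)
    = Delta_ext_basis (set xs)"
proof (induction xs)
  case (Cons x xs)
  then have "x < n" "\<forall>y\<in>set xs. x < y" using le_neq_trans by auto
  then show ?case using Cons Delta_ext_basis_insert_min by simp
qed (simp add: Delta_ext_basis_empty)

lemma sa_Delta_basis_eq:
  assumes S: "S \<subseteq> {..<n}"
  shows "sa_Delta_basis n \<rho> u S g = (\<lambda>A a B b.
    if A \<union> B = S \<and> A \<inter> B = {} \<and> a = u_pow (card B) + g \<and> b = g then (ext_sign A B :: 'k) else 0)"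
proof (intro ext)
  fix A a B b
  have "finite S" using S finite_subset by blast
  then have "foldr (\<lambda>i acc. sa2_mul n \<rho> (sa_Delta_gen n u i) acc) (sorted_list_of_set S)
      (sa_tensor sa_one sa_one) = Delta_ext_basis S"
    using Delta_ext_basis_foldr[of "sorted_list_of_set S"] S by simp
  then have "sa_Delta_basis n \<rho> u S g A a B b = (\<Sum>P1\<in>Pow {..<n}. \<Sum>p1\<in>UNIV. \<Sum>P2\<in>Pow {..<n}. \<Sum>p2\<in>UNIV.
        Delta_ext_basis S P1 p1 P2 p2 * basis_mul P1 p1 {} g A a * basis_mul P2 p2 {} g B b)"
    unfolding sa_Delta_basis_def sa_grp_def sa2_mul_tensor_basis_right by simp
  also have "\<dots> = (if A \<subseteq> {..<n} \<and> B \<subseteq> {..<n} then Delta_ext_basis S A (a - g) B (b - g)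
      * basis_mul A (a - g) {} g A a * basis_mul B (b - g) {} g B b else 0)"
    by (rule sum4_single) (auto simp: basis_mul_empty algebra_simps split: if_splits)
  also have "\<dots> = (if A \<union> B = S \<and> A \<inter> B = {} \<and> a = u_pow (card B) + g \<and> b = g then ext_sign A B else 0)"
    using S by (auto simp: basis_mul_empty Delta_ext_basis_def algebra_simps)
  finally show "sa_Delta_basis n \<rho> u S g A a B b
    = (if A \<union> B = S \<and> A \<inter> B = {} \<and> a = u_pow (card B) + g \<and> b = g then ext_sign A B else 0)" .
qed

lemma sa_map2_twist:
  "sa_map2 n twist X S1 g1 S2 g2 = (if S1 \<subseteq> {..<n} \<and> S2 \<subseteq> {..<n}
     then rev_sign (card S1) * rev_sign (card S2) * X S1 (g1 + u_pow (card S1)) S2 (g2 + u_pow (card S2))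
     else 0)"
proof -
  have "sa_map2 n twist X S1 g1 S2 g2 = (if S1 \<subseteq> {..<n} \<and> S2 \<subseteq> {..<n}
      then X S1 (g1 + u_pow (card S1)) S2 (g2 + u_pow (card S2))
        * twist (sa_basis S1 (g1 + u_pow (card S1))) S1 g1
        * twist (sa_basis S2 (g2 + u_pow (card S2))) S2 g2 else 0)"
    unfolding sa_map2_def
  proof (rule sum4_single)
    fix P p Q q
    assume "X P p Q q * twist (sa_basis P p) S1 g1 * twist (sa_basis Q q) S2 g2 \<noteq> 0"
    then have "twist (sa_basis P p) S1 g1 \<noteq> 0" "twist (sa_basis Q q) S2 g2 \<noteq> 0" by auto
    then show "P = S1 \<and> p = g1 + u_pow (card S1) \<and> Q = S2 \<and> q = g2 + u_pow (card S2)"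
      by (auto simp: twist_basis split: if_splits)
  qed
  then show ?thesis by (simp add: twist_basis)
qed

lemma sa_Delta_basis_swap:
  fixes S1 S2 :: "nat set" and g1 g2 :: 'g
  assumes S: "S \<subseteq> {..<n}"
  shows "rev_sign (card S) * sa_Delta_basis n \<rho> u S (g + u_pow (card S)) S2 g2 S1 g1
    = (if S1 \<subseteq> {..<n} \<and> S2 \<subseteq> {..<n} then rev_sign (card S1) * rev_sign (card S2)
        * sa_Delta_basis n \<rho> u S g S1 (g1 + u_pow (card S1)) S2 (g2 + u_pow (card S2)) else (0::'k))"
proof (cases "S1 \<union> S2 = S \<and> S1 \<inter> S2 = {}")
  case False
  then show ?thesis unfolding sa_Delta_basis_eq[OF S] by auto
next
  case True
  have fin: "finite S1" "finite S2" using True S by (auto intro: finite_subset)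
  have sub: "S1 \<subseteq> {..<n}" "S2 \<subseteq> {..<n}" using True S by auto
  have card_S: "card S = card S1 + card S2" using True fin card_Un_disjoint by blast
  then have u_pow_S: "u_pow (card S) = u_pow (card S1) + u_pow (card S2)" by (simp add: u_pow_add)
  have e1: "(g1 = g + u_pow (card S)) = (g1 + u_pow (card S1) = u_pow (card S2) + g)"
    unfolding add_eq_iff_eq_add_self_inverse[OF u_pow_add_self] u_pow_S by (simp add: add_ac)
  have "u_pow (card S1) + (g + u_pow (card S)) = g + u_pow (card S2)"
    unfolding u_pow_S by (metis add.commute add_u_pow_add_u_pow add.left_commute)
  then have e2: "(g2 = u_pow (card S1) + (g + u_pow (card S))) = (g2 + u_pow (card S2) = g)"
    unfolding add_eq_iff_eq_add_self_inverse[OF u_pow_add_self] by (rule arg_cong)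
  have "(ext_sign S1 S2 :: 'k) = (-1) ^ (card S1 * card S2) * ext_sign S2 S1"
    using ext_sign_swap[where 'k='k, OF _ fin] True by simp
  then have "rev_sign (card S) * (ext_sign S2 S1 :: 'k) = rev_sign (card S1) * rev_sign (card S2) * ext_sign S1 S2"
    by (simp add: card_S rev_sign_add algebra_simps)
  then show ?thesis
    unfolding sa_Delta_basis_eq[OF S] e1 e2 using True sub by (auto simp: Un_commute Int_commute)
qed

lemma twist_Delta: "sa_Delta_cop n \<rho> u (twist a) = sa_map2 n twist (sa_Delta n \<rho> u a)"
proof (intro ext)
  fix S1 g1 S2 g2
  let ?C = "S1 \<subseteq> {..<n} \<and> S2 \<subseteq> {..<n}"
  let ?D = "sa_Delta_basis n \<rho> u"
  have "sa_Delta_cop n \<rho> u (twist a) S1 g1 S2 g2 = (\<Sum>S\<in>Pow {..<n}. \<Sum>g\<in>UNIV. twist a S g * ?D S g S2 g2 S1 g1)"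
    by (simp add: sa_Delta_cop_def sa_Delta_def)
  also have "\<dots> = (\<Sum>S\<in>Pow {..<n}. \<Sum>g\<in>UNIV.
      twist a S (g + u_pow (card S)) * ?D S (g + u_pow (card S)) S2 g2 S1 g1)"
    by (rule sum.cong[OF refl], rule sum_UNIV_translate)
  also have "\<dots> = (\<Sum>S\<in>Pow {..<n}. \<Sum>g\<in>UNIV.
      a S g * (rev_sign (card S) * ?D S (g + u_pow (card S)) S2 g2 S1 g1))"
    by (simp add: twist_def algebra_simps)
  also have "\<dots> = (\<Sum>S\<in>Pow {..<n}. \<Sum>g\<in>UNIV. a S g * (if ?C then rev_sign (card S1) * rev_sign (card S2)
      * ?D S g S1 (g1 + u_pow (card S1)) S2 (g2 + u_pow (card S2)) else 0))"
    by (intro sum.cong refl) (simp add: sa_Delta_basis_swap)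
  also have "\<dots> = (if ?C then rev_sign (card S1) * rev_sign (card S2)
      * sa_Delta n \<rho> u a S1 (g1 + u_pow (card S1)) S2 (g2 + u_pow (card S2)) else 0)"
  proof (cases ?C)
    case False
    then show ?thesis by (simp only: if_not_P[OF False] if_False mult_zero_right sum.neutral_const)
  qed (simp add: sa_Delta_def sum_distrib_left mult_ac)
  also have "\<dots> = sa_map2 n twist (sa_Delta n \<rho> u a) S1 g1 S2 g2"
    by (simp add: sa_map2_twist)
  finally show "sa_Delta_cop n \<rho> u (twist a) S1 g1 S2 g2 = sa_map2 n twist (sa_Delta n \<rho> u a) S1 g1 S2 g2" .
qed

lemma sa_map2_cong_basis:
  assumes "\<And>S g. S \<subseteq> {..<n} \<Longrightarrow> \<phi> (sa_basis S g) = \<psi> (sa_basis S g)"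
  shows "sa_map2 n \<phi> = sa_map2 n \<psi>"
  unfolding sa_map2_def by (intro ext sum.cong refl) (auto simp: assms)

end

theorem lemma3p1:
  fixes \<rho> :: "'g::{ab_group_add,finite} \<Rightarrow> nat \<Rightarrow> nat \<Rightarrow> 'k::field_char_0"
    and u :: 'g and n :: nat
  assumes "alg_closed_type TYPE('k)"
    and "u \<noteq> 0" and "u + u = 0"
    and "is_rep n \<rho>"
    and "\<forall>i<n. \<forall>j<n. \<rho> u i j = (if i = j then -1 else 0)"
  shows "(\<exists>\<phi>. sa_alg_hom n \<rho> \<phi>
            \<and> (\<forall>x. \<phi> (sa_vec n x) = sa_mul n \<rho> (sa_vec n x) (sa_grp u))
            \<and> (\<forall>g. \<phi> (sa_grp g) = sa_grp g))
       \<and> (\<forall>\<phi>. sa_alg_hom n \<rho> \<phi>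
            \<and> (\<forall>x. \<phi> (sa_vec n x) = sa_mul n \<rho> (sa_vec n x) (sa_grp u))
            \<and> (\<forall>g. \<phi> (sa_grp g) = sa_grp g)
          \<longrightarrow> bij_betw \<phi> (sa_carrier n) (sa_carrier n)
            \<and> (\<forall>a\<in>sa_carrier n. sa_Delta_cop n \<rho> u (\<phi> a) = sa_map2 n \<phi> (sa_Delta n \<rho> u a))
            \<and> (\<forall>a\<in>sa_carrier n. sa_eps (\<phi> a) = sa_eps a))"
proof -
  interpret finite_supergroup \<rho> u n by unfold_locales (simp_all add: assms)
  have "bij_betw \<phi> (sa_carrier n) (sa_carrier n)
      \<and> (\<forall>a\<in>sa_carrier n. sa_Delta_cop n \<rho> u (\<phi> a) = sa_map2 n \<phi> (sa_Delta n \<rho> u a))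
      \<and> (\<forall>a\<in>sa_carrier n. sa_eps (\<phi> a) = sa_eps a)"
    if hom: "sa_alg_hom n \<rho> \<phi>"
      and vec: "\<forall>x. \<phi> (sa_vec n x) = sa_mul n \<rho> (sa_vec n x) (sa_grp u)"
      and grp: "\<forall>g. \<phi> (sa_grp g) = sa_grp g" for \<phi>
  proof -
    have eq: "\<phi> a = twist a" if "a \<in> sa_carrier n" for a
      using sa_alg_hom_eq_twist[OF hom vec grp that] .
    have "sa_map2 n \<phi> = sa_map2 n twist"
      by (intro sa_map2_cong_basis eq sa_basis_carrier)
    then show ?thesis
      using bij_betw_twist bij_betw_cong[of "sa_carrier n" \<phi> twist] eq twist_Delta twist_eps by simp
  qed
  then show ?thesis using sa_alg_hom_twist twist_vec twist_grp by blast
qed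

end
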